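(* Suppose the weights satisfy the discrete Pearson equations $\theta(k+1)w^{(a)}(k+1)=\sigma^{(a)}(k)w^{(a)}(k)$, $k\in\mathbb N_0$, $a\in\{1,2\}$, with $\theta,\sigma^{(1)},\sigma^{(2)}$ polynomials and $\theta(0)=0$. Then \[ \Pi^{-1}\theta(T)=\sigma^{(1)}\big({T^{(1)}}^\top\big){\Pi^{(1)}}^\top+\sigma^{(2)}\big({T^{(2)}}^\top\big){\Pi^{(2)}}^\top. \]
   Context: Let $w^{(1)},w^{(2)}:\mathbb N_0\to\mathbb C$ be weights, $X(x)=(1,x,x^2,\dots)^\top$, $X^{(1)}(x)=(1,0,x,0,\dots)^\top$, $X^{(2)}(x)=(0,1,0,x,\dots)^\top$, and $\mathscr M=\sum_k X(k)(w^{(1)}(k)X^{(1)}(k)+w^{(2)}(k)X^{(2)}(k))^\top$ the moment matrix (series absolutely convergent). Assume all leading principal minors of $\mathscr M$ are nonzero, so $\mathscr M=S^{-1}H\tilde S^{-\top}$ with $S,\tilde S$ lower unitriangular and $H$ diagonal. $\Lambda$ is the matrix with ones on the first superdiagonal, $I^{(1)}=\operatorname{diag}(1,0,1,0,\dots)$, $I^{(2)}=\operatorname{diag}(0,1,0,1,\dots)$, $\Lambda^{(a)}=\Lambda^2I^{(a)}$. $T=S\Lambda S^{-1}$ and $T^{(a)}=H^{-1}\tilde S\Lambda^{(a)}\tilde S^{-1}H$. $L$ is the Pascal matrix $L_{n,m}=\binom nm$ ($n\ge m$), $\Pi=SLS^{-1}$, $\Pi^{-1}=SL^{-1}S^{-1}$;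 $L^{(a)}$ has only nonzero entries $L^{(a)}_{2n+a-1,2m+a-1}=\binom nm$ ($n\ge m$), and $\Pi^{(a)}=H^{-1}\tilde SL^{(a)}\tilde S^{-1}H$. *)

theory Defs
  imports "HOL-Analysis.Infinite_Sum" "HOL-Computational_Algebra.Polynomial"
          "Jordan_Normal_Form.Determinant"
begin

type_synonym imat = "nat \<Rightarrow> nat \<Rightarrow> complex"

text \<open>Matrix product as the (unconditional) series over the inner index; in all
  products occurring below the series has finite support.\<close>
definition im_mult :: "imat \<Rightarrow> imat \<Rightarrow> imat" (infixl "\<star>" 70) where
  "im_mult A B = (\<lambda>i j. infsum (\<lambda>k. A i k * B k j) UNIV)"

definition im_id :: imat where
  "im_id = (\<lambda>i j. if i = j then 1 else 0)"

definition im_diag :: "(nat \<Rightarrow> complex) \<Rightarrow> imat" where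
  "im_diag d = (\<lambda>i j. if i = j then d i else 0)"

definition im_transpose :: "imat \<Rightarrow> imat" where
  "im_transpose A = (\<lambda>i j. A j i)"

definition im_add :: "imat \<Rightarrow> imat \<Rightarrow> imat" where
  "im_add A B = (\<lambda>i j. A i j + B i j)"

definition im_smult :: "complex \<Rightarrow> imat \<Rightarrow> imat" where
  "im_smult c A = (\<lambda>i j. c * A i j)"

primrec im_pow :: "imat \<Rightarrow> nat \<Rightarrow> imat" where
  "im_pow A 0 = im_id"
| "im_pow A (Suc n) = A \<star> im_pow A n"

definition im_poly :: "complex poly \<Rightarrow> imat \<Rightarrow> imat" where
  "im_poly p A = (\<lambda>i j. \<Sum>n\<le>degree p. coeff p n * im_pow A n i j)"

definition lower_unitri :: "imat \<Rightarrow> bool" where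
  "lower_unitri A \<longleftrightarrow> (\<forall>i j. i < j \<longrightarrow> A i j = 0) \<and> (\<forall>i. A i i = 1)"

definition lower_tri :: "imat \<Rightarrow> bool" where
  "lower_tri A \<longleftrightarrow> (\<forall>i j. i < j \<longrightarrow> A i j = 0)"

definition im_linv :: "imat \<Rightarrow> imat" where
  "im_linv A = (THE B. lower_tri B \<and> A \<star> B = im_id \<and> B \<star> A = im_id)"

definition Xvec :: "complex \<Rightarrow> nat \<Rightarrow> complex" where
  "Xvec x n = x ^ n"

definition Xvec1 :: "complex \<Rightarrow> nat \<Rightarrow> complex" where
  "Xvec1 x n = (if even n then x ^ (n div 2) else 0)"

definition Xvec2 :: "complex \<Rightarrow> nat \<Rightarrow> complex" where
  "Xvec2 x n = (if odd n then x ^ (n div 2) else 0)"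

definition moment :: "(nat \<Rightarrow> complex) \<Rightarrow> (nat \<Rightarrow> complex) \<Rightarrow> imat" where
  "moment w1 w2 = (\<lambda>n m. \<Sum>k. Xvec (of_nat k) n *
       (w1 k * Xvec1 (of_nat k) m + w2 k * Xvec2 (of_nat k) m))"

definition lead_minor :: "imat \<Rightarrow> nat \<Rightarrow> complex" where
  "lead_minor A N = det (mat (Suc N) (Suc N) (\<lambda>(i, j). A i j))"

definition Lambda :: imat where
  "Lambda = (\<lambda>i j. if j = Suc i then 1 else 0)"

definition Ipar :: "nat \<Rightarrow> imat" where
  "Ipar a = im_diag (\<lambda>i. if i mod 2 = a - 1 then 1 else 0)"

definition Lambda_par :: "nat \<Rightarrow> imat" where
  "Lambda_par a = im_pow Lambda 2 \<star> Ipar a"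

definition Pascal :: imat where
  "Pascal = (\<lambda>n m. of_nat (n choose m))"

definition Pascal_par :: "nat \<Rightarrow> imat" where
  "Pascal_par a = (\<lambda>i j. if i mod 2 = a - 1 \<and> j mod 2 = a - 1
                          then of_nat ((i div 2) choose (j div 2)) else 0)"

definition Tmat :: "imat \<Rightarrow> imat" where
  "Tmat S = S \<star> Lambda \<star> im_linv S"

definition Tpar :: "(nat \<Rightarrow> complex) \<Rightarrow> imat \<Rightarrow> nat \<Rightarrow> imat" where
  "Tpar h St a = im_diag (\<lambda>i. 1 / h i) \<star> St \<star> Lambda_par a \<star> im_linv St \<star> im_diag h"

definition PiMat :: "imat \<Rightarrow> imat" where
  "PiMat S = S \<star> Pascal \<star> im_linv S"

definition PiInv :: "imat \<Rightarrow> imat" where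
  "PiInv S = S \<star> im_linv Pascal \<star> im_linv S"

definition PiPar :: "(nat \<Rightarrow> complex) \<Rightarrow> imat \<Rightarrow> nat \<Rightarrow> imat" where
  "PiPar h St a = im_diag (\<lambda>i. 1 / h i) \<star> St \<star> Pascal_par a \<star> im_linv St \<star> im_diag h"

end

theory Submission
  imports Defs
begin

text \<open>
  The moment matrix is the series \<open>M = \<Sum>\<^sub>t X(t) Y(t)\<^sup>T\<close> with
  \<open>Y(t) = w1(t) X1(t) + w2(t) X2(t)\<close>, and these vectors are eigenvectors of the structured
  matrices: \<open>\<Lambda> X(t) = t X(t)\<close>, \<open>L X(t) = X(t + 1)\<close>, \<open>\<Lambda>\<^sup>a Xa(t) = t Xa(t)\<close> and
  \<open>L\<^sup>a Xa(t) = Xa(t + 1)\<close>. Hence \<open>\<theta>(\<Lambda>) M = \<Sum>\<^sub>t \<theta>(t) X(t) Y(t)\<^sup>T\<close>; the term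
  \<open>t = 0\<close> vanishes because \<open>\<theta>(0) = 0\<close>, and after the shift \<open>t \<mapsto> t + 1\<close> the Pearson
  equations turn \<open>\<theta>(t + 1) Y(t + 1)\<close> into \<open>R Y(t)\<close> with
  \<open>R = L\<^sup>1 \<sigma>1(\<Lambda>\<^sup>1) + L\<^sup>2 \<sigma>2(\<Lambda>\<^sup>2)\<close>, so that \<open>\<theta>(\<Lambda>) M = L M R\<^sup>T\<close>.
  Inserting \<open>M = S\<^sup>-\<^sup>1 H St\<^sup>-\<^sup>T\<close>, this says that
  \<open>\<Pi>\<^sup>-\<^sup>1 \<theta>(T) = S L\<^sup>-\<^sup>1 \<theta>(\<Lambda>) S\<^sup>-\<^sup>1\<close> is the transpose of \<open>U R U\<^sup>-\<^sup>1\<close> for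
  \<open>U = H\<^sup>-\<^sup>1 St\<close>, and conjugating the two summands of \<open>R\<close> by \<open>U\<close> gives
  \<open>\<sigma>a(T\<^sup>a\<^sup>T) \<Pi>\<^sup>a\<^sup>T\<close>.
\<close>

section \<open>Row-finite matrices\<close>

definition row_support :: "imat \<Rightarrow> nat \<Rightarrow> nat set" where
  "row_support A i = {k. A i k \<noteq> 0}"

definition row_finite :: "imat \<Rightarrow> bool" where
  "row_finite A \<longleftrightarrow> (\<forall>i. finite (row_support A i))"

lemma row_finiteD: "row_finite A \<Longrightarrow> finite (row_support A i)"
  by (simp add: row_finite_def)

lemma im_mult_eq_sum:
  assumes "finite F" and "\<And>k. k \<notin> F \<Longrightarrow> A i k * B k j = 0"
  shows "(A \<star> B) i j = (\<Sum>k\<in>F. A i k * B k j)"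
proof -
  have "(A \<star> B) i j = infsum (\<lambda>k. A i k * B k j) F"
    unfolding im_mult_def by (rule infsum_cong_neutral) (use assms(2) in auto)
  with assms(1) show ?thesis by simp
qed

lemma im_mult_row_support:
  assumes "finite F" and "row_support A i \<subseteq> F"
  shows "(A \<star> B) i j = (\<Sum>k\<in>F. A i k * B k j)"
  using assms by (intro im_mult_eq_sum) (auto simp: row_support_def)

lemma row_support_mult: "row_finite A \<Longrightarrow>
    row_support (A \<star> B) i \<subseteq> (\<Union>k\<in>row_support A i. row_support B k)"
  by (auto simp: row_support_def im_mult_row_support[OF row_finiteD subset_refl]
      intro!: sum.neutral)

lemma row_finite_mult: "row_finite A \<Longrightarrow> row_finite B \<Longrightarrow> row_finite (A \<star> B)"
  unfolding row_finite_def by (metis finite_UN_I finite_subset row_finite_def row_support_mult)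

text \<open>Products of infinite matrices need not be associative; the finiteness hypotheses below make
  the double sum finite.\<close>

lemma im_mult_assoc_entry:
  assumes "finite F" "finite G" "\<And>k. k \<notin> F \<Longrightarrow> A i k = 0"
    and "\<And>k l. k \<in> F \<Longrightarrow> l \<notin> G \<Longrightarrow> B k l * C l j = 0"
  shows "((A \<star> B) \<star> C) i j = (A \<star> (B \<star> C)) i j"
proof -
  have AB: "(A \<star> B) i l = (\<Sum>k\<in>F. A i k * B k l)" for l
    using assms(1,3) by (intro im_mult_eq_sum) auto
  have "((A \<star> B) \<star> C) i j = (\<Sum>l\<in>G. (\<Sum>k\<in>F. A i k * B k l) * C l j)"
    using assms(2,4)
    by (subst im_mult_eq_sum[of G]) (auto simp: AB sum_distrib_right mult.assoc intro!: sum.neutral)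
  also have "\<dots> = (\<Sum>k\<in>F. A i k * (\<Sum>l\<in>G. B k l * C l j))"
    by (simp add: sum_distrib_left sum_distrib_right mult.assoc sum.swap[of _ G])
  also have "\<dots> = (A \<star> (B \<star> C)) i j"
    using assms by (subst im_mult_eq_sum[of F]) (auto intro!: sum.cong im_mult_eq_sum[symmetric])
  finally show ?thesis .
qed

lemma im_mult_assoc:
  assumes "row_finite A" "row_finite B"
  shows "(A \<star> B) \<star> C = A \<star> (B \<star> C)"
proof (intro ext)
  fix i j
  let ?F = "row_support A i"
  show "((A \<star> B) \<star> C) i j = (A \<star> (B \<star> C)) i j"
    using assms by (intro im_mult_assoc_entry[of ?F "\<Union>k\<in>?F. row_support B k"])
      (auto simp: row_finite_def row_support_def)
qed

lemma im_mult_assoc_transpose: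
  assumes "row_finite A" "row_finite C"
  shows "(A \<star> B) \<star> im_transpose C = A \<star> (B \<star> im_transpose C)"
proof (intro ext)
  fix i j
  show "((A \<star> B) \<star> im_transpose C) i j = (A \<star> (B \<star> im_transpose C)) i j"
    using assms by (intro im_mult_assoc_entry[of "row_support A i" "row_support C j"])
      (auto simp: row_finite_def row_support_def im_transpose_def)
qed

lemma im_id_mult [simp]: "im_id \<star> A = A"
proof (intro ext)
  fix i j
  have "(im_id \<star> A) i j = (\<Sum>k\<in>{i}. im_id i k * A k j)"
    by (rule im_mult_eq_sum) (auto simp: im_id_def)
  then show "(im_id \<star> A) i j = A i j" by (simp add: im_id_def)
qed

lemma im_mult_id [simp]: "A \<star> im_id = A"
proof (intro ext)
  fix i j
  have "(A \<star> im_id) i j = (\<Sum>k\<in>{j}. A i k * im_id k j)"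
    by (rule im_mult_eq_sum) (auto simp: im_id_def)
  then show "(A \<star> im_id) i j = A i j" by (simp add: im_id_def)
qed

lemma im_diag_mult_diag: "im_diag d \<star> im_diag e = im_diag (\<lambda>i. d i * e i)"
proof (intro ext)
  fix i j
  have "(im_diag d \<star> im_diag e) i j = (\<Sum>k\<in>{i}. im_diag d i k * im_diag e k j)"
    by (rule im_mult_eq_sum) (auto simp: im_diag_def)
  then show "(im_diag d \<star> im_diag e) i j = im_diag (\<lambda>i. d i * e i) i j"
    by (simp add: im_diag_def)
qed

lemma im_transpose_mult: "im_transpose (A \<star> B) = im_transpose B \<star> im_transpose A"
  by (simp add: im_transpose_def im_mult_def mult.commute)

lemma im_transpose_id [simp]: "im_transpose im_id = im_id"
  by (auto simp: im_transpose_def im_id_def fun_eq_iff)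

lemma im_transpose_diag [simp]: "im_transpose (im_diag d) = im_diag d"
  by (auto simp: im_transpose_def im_diag_def fun_eq_iff)

lemma im_transpose_add: "im_transpose (im_add A B) = im_add (im_transpose A) (im_transpose B)"
  by (simp add: im_transpose_def im_add_def)

lemma row_finite_id [simp]: "row_finite im_id"
  by (simp add: row_finite_def row_support_def im_id_def)

lemma row_finite_diag [simp]: "row_finite (im_diag d)"
  by (simp add: row_finite_def row_support_def im_diag_def)

lemma row_finite_Lambda [simp]: "row_finite Lambda"
  by (simp add: row_finite_def row_support_def Lambda_def)

lemma lower_tri_row_finite: "lower_tri A \<Longrightarrow> row_finite A"
  unfolding row_finite_def row_support_def lower_tri_def
  by (metis (mono_tags, lifting) finite_nat_set_iff_bounded_le mem_Collect_eq not_le)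

lemma row_support_add: "row_support (im_add A B) i \<subseteq> row_support A i \<union> row_support B i"
  by (auto simp: row_support_def im_add_def)

lemma row_finite_add [simp]: "row_finite A \<Longrightarrow> row_finite B \<Longrightarrow> row_finite (im_add A B)"
  unfolding row_finite_def by (meson finite_UnI finite_subset row_support_add)

lemma row_finite_pow [simp]: "row_finite A \<Longrightarrow> row_finite (im_pow A n)"
  by (induction n) (auto intro: row_finite_mult)

lemma row_finite_lincomb:
  assumes "finite N" "\<And>n. n \<in> N \<Longrightarrow> row_finite (M n)"
  shows "row_finite (\<lambda>i j. \<Sum>n\<in>N. c n * M n i j)"
  unfolding row_finite_def
proof
  fix i
  show "finite (row_support (\<lambda>i j. \<Sum>n\<in>N. c n * M n i j) i)"
    by (rule finite_subset[of _ "\<Union>n\<in>N. row_support (M n) i"])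
      (use assms in \<open>auto simp: row_support_def row_finite_def intro: sum.neutral\<close>)
qed

lemma row_finite_poly [simp]: "row_finite A \<Longrightarrow> row_finite (im_poly p A)"
  unfolding im_poly_def by (rule row_finite_lincomb) simp_all

lemma im_add_mult:
  assumes "row_finite A" "row_finite B"
  shows "im_add A B \<star> C = im_add (A \<star> C) (B \<star> C)"
proof (intro ext)
  fix i j
  let ?F = "row_support A i \<union> row_support B i"
  have F: "finite ?F" using assms by (simp add: row_finite_def)
  show "(im_add A B \<star> C) i j = im_add (A \<star> C) (B \<star> C) i j"
    using F row_support_add[of A B i]
    by (simp add: im_mult_row_support[of ?F] im_add_def distrib_right sum.distrib)
qed

lemma im_mult_add:
  assumes "row_finite A"
  shows "A \<star> im_add B C = im_add (A \<star> B) (A \<star> C)"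
  using assms
  by (intro ext) (simp add: im_mult_row_support[OF row_finiteD subset_refl] im_add_def
      distrib_left sum.distrib)

lemma im_mult_lincomb_left:
  assumes "row_finite A"
  shows "A \<star> (\<lambda>i j. \<Sum>n\<in>N. c n * M n i j) = (\<lambda>i j. \<Sum>n\<in>N. c n * (A \<star> M n) i j)"
  using assms
  by (intro ext) (simp add: im_mult_row_support[OF row_finiteD subset_refl]
      sum_distrib_left sum.swap[of _ N] mult_ac)

lemma im_mult_lincomb_right:
  assumes "finite N" "\<And>n. n \<in> N \<Longrightarrow> row_finite (M n)"
  shows "(\<lambda>i j. \<Sum>n\<in>N. c n * M n i j) \<star> B = (\<lambda>i j. \<Sum>n\<in>N. c n * (M n \<star> B) i j)"
proof (intro ext)
  fix i j
  let ?F = "\<Union>n\<in>N. row_support (M n) i"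
  have F: "finite ?F" "\<And>n. n \<in> N \<Longrightarrow> row_support (M n) i \<subseteq> ?F"
    using assms by (auto simp: row_finite_def)
  have "((\<lambda>i j. \<Sum>n\<in>N. c n * M n i j) \<star> B) i j = (\<Sum>k\<in>?F. (\<Sum>n\<in>N. c n * M n i k) * B k j)"
    using F by (intro im_mult_eq_sum) (auto simp: row_support_def intro!: sum.neutral)
  also have "\<dots> = (\<Sum>n\<in>N. c n * (\<Sum>k\<in>?F. M n i k * B k j))"
    by (simp add: sum_distrib_left sum_distrib_right sum.swap[of _ ?F] mult_ac)
  also have "\<dots> = (\<Sum>n\<in>N. c n * (M n \<star> B) i j)"
    using F by (intro sum.cong refl) (simp add: im_mult_row_support)
  finally show "((\<lambda>i j. \<Sum>n\<in>N. c n * M n i j) \<star> B) i j = (\<Sum>n\<in>N. c n * (M n \<star> B) i j)" .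
qed

lemma im_pow_Suc_right: "row_finite A \<Longrightarrow> im_pow A (Suc n) = im_pow A n \<star> A"
proof (induction n)
  case (Suc n)
  have "im_pow A (Suc (Suc n)) = A \<star> (im_pow A n \<star> A)"
    using Suc by simp
  also have "\<dots> = im_pow A (Suc n) \<star> A"
    using Suc.prems by (simp add: im_mult_assoc)
  finally show ?case .
qed simp

lemma im_transpose_pow: "row_finite A \<Longrightarrow> im_transpose (im_pow A n) = im_pow (im_transpose A) n"
proof (induction n)
  case (Suc n)
  have "im_transpose (im_pow A (Suc n)) = im_transpose (im_pow A n \<star> A)"
    using Suc.prems by (simp only: im_pow_Suc_right)
  also have "\<dots> = im_transpose A \<star> im_pow (im_transpose A) n"
    using Suc by (simp add: im_transpose_mult)
  finally show ?case by simp
qed simp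

lemma im_transpose_poly:
  assumes "row_finite A"
  shows "im_transpose (im_poly p A) = im_poly p (im_transpose A)"
proof -
  have "im_pow (im_transpose A) n i j = im_pow A n j i" for n i j
    using im_transpose_pow[OF assms, of n] by (metis im_transpose_def)
  then show ?thesis by (simp add: im_poly_def im_transpose_def)
qed

section \<open>Inverse pairs and conjugation\<close>

definition inverse_pair :: "imat \<Rightarrow> imat \<Rightarrow> bool" where
  "inverse_pair U V \<longleftrightarrow> row_finite U \<and> row_finite V \<and> U \<star> V = im_id \<and> V \<star> U = im_id"

lemma inverse_pair_cancel:
  assumes "inverse_pair U V"
  shows "U \<star> (V \<star> X) = X" "V \<star> (U \<star> X) = X"
  using assms by (simp_all add: inverse_pair_def flip: im_mult_assoc)

lemma inverse_pair_mult:
  assumes "inverse_pair A A'" "inverse_pair B B'"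
  shows "inverse_pair (A \<star> B) (B' \<star> A')"
  using assms by (simp add: inverse_pair_def row_finite_mult im_mult_assoc inverse_pair_cancel)

lemma inverse_pair_diag: "(\<And>i. h i \<noteq> 0) \<Longrightarrow> inverse_pair (im_diag (\<lambda>i. 1 / h i)) (im_diag h)"
  by (simp add: inverse_pair_def im_diag_mult_diag) (simp add: im_diag_def im_id_def fun_eq_iff)

lemma conjugate_mult:
  assumes "inverse_pair U V" "row_finite A" "row_finite B"
  shows "(U \<star> A \<star> V) \<star> (U \<star> B \<star> V) = U \<star> (A \<star> B) \<star> V"
  using assms by (simp add: inverse_pair_def row_finite_mult im_mult_assoc inverse_pair_cancel)

lemma conjugate_add:
  assumes "row_finite U" "row_finite A" "row_finite B"
  shows "im_add (U \<star> A \<star> V) (U \<star> B \<star> V) = U \<star> im_add A B \<star> V"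
  using assms by (simp add: im_mult_add im_add_mult row_finite_mult)

lemma im_pow_conjugate:
  assumes "inverse_pair U V" "row_finite A"
  shows "im_pow (U \<star> A \<star> V) n = U \<star> im_pow A n \<star> V"
proof (induction n)
  case 0
  then show ?case using assms(1) by (simp add: inverse_pair_def)
next
  case (Suc n)
  then show ?case using assms by (simp add: conjugate_mult)
qed

lemma im_poly_conjugate:
  assumes "inverse_pair U V" "row_finite A"
  shows "im_poly p (U \<star> A \<star> V) = U \<star> im_poly p A \<star> V"
proof -
  have rows: "row_finite U" "row_finite V" using assms(1) by (simp_all add: inverse_pair_def)
  have "U \<star> im_poly p A \<star> V
      = (\<lambda>i j. \<Sum>n\<le>degree p. coeff p n * (U \<star> im_pow A n) i j) \<star> V"
    unfolding im_poly_def using rows by (simp add: im_mult_lincomb_left)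
  also have "\<dots> = (\<lambda>i j. \<Sum>n\<le>degree p. coeff p n * (U \<star> im_pow A n \<star> V) i j)"
    using rows assms(2) by (simp add: im_mult_lincomb_right row_finite_mult)
  finally show ?thesis
    using assms by (simp add: im_poly_def im_pow_conjugate)
qed

lemma conjugate_eq_transpose_conjugate:
  assumes SS': "inverse_pair S S'" and UV: "inverse_pair U V"
    and A: "row_finite A" and B: "row_finite B"
    and intertwining: "A \<star> (S' \<star> im_transpose V) = (S' \<star> im_transpose V) \<star> im_transpose B"
  shows "S \<star> A \<star> S' = im_transpose (U \<star> B \<star> V)"
proof -
  have rows: "row_finite S" "row_finite S'" "row_finite U" "row_finite V"
    using SS' UV by (simp_all add: inverse_pair_def)
  then have row_SAS': "row_finite (S \<star> A \<star> S')" using A by (simp add: row_finite_mult)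
  have "(S \<star> A \<star> S') \<star> im_transpose V = S \<star> (A \<star> (S' \<star> im_transpose V))"
    using rows A by (simp add: im_mult_assoc row_finite_mult)
  also have "\<dots> = im_transpose V \<star> im_transpose B"
    using rows B SS' by (simp add: intertwining im_mult_assoc_transpose inverse_pair_cancel)
  finally have SAS'_V: "(S \<star> A \<star> S') \<star> im_transpose V = im_transpose V \<star> im_transpose B" .
  have "S \<star> A \<star> S' = (S \<star> A \<star> S') \<star> (im_transpose V \<star> im_transpose U)"
    using UV by (simp add: inverse_pair_def flip: im_transpose_mult)
  also have "\<dots> = (im_transpose V \<star> im_transpose B) \<star> im_transpose U"
    using row_SAS' rows by (simp add: im_mult_assoc_transpose flip: SAS'_V)
  also have "\<dots> = im_transpose (U \<star> B \<star> V)"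
    using rows B by (simp add: im_transpose_mult im_mult_assoc)
  finally show ?thesis .
qed

lemma transpose_conjugate_poly_mult:
  assumes "inverse_pair U V" "row_finite A" "row_finite B"
  shows "im_poly p (im_transpose (U \<star> A \<star> V)) \<star> im_transpose (U \<star> B \<star> V)
       = im_transpose (U \<star> (B \<star> im_poly p A) \<star> V)"
proof -
  have rows: "row_finite U" "row_finite V" using assms(1) by (simp_all add: inverse_pair_def)
  then have "im_poly p (im_transpose (U \<star> A \<star> V)) = im_transpose (U \<star> im_poly p A \<star> V)"
    using assms by (simp add: row_finite_mult im_poly_conjugate flip: im_transpose_poly)
  then show ?thesis
    using assms by (simp add: conjugate_mult flip: im_transpose_mult)
qed

section \<open>Inverses of lower unitriangular matrices\<close>

function unitri_inv :: "imat \<Rightarrow> imat" where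
  "unitri_inv A i j = (if i < j then 0 else if i = j then 1
     else - (\<Sum>k\<in>{j..<i}. A i k * unitri_inv A k j))"
  by auto
termination by (relation "measure (\<lambda>(A, i, j). i)") auto

declare unitri_inv.simps [simp del]

lemma lower_unitri_unitri_inv: "lower_unitri (unitri_inv A)"
  by (simp add: lower_unitri_def unitri_inv.simps)

lemma lower_unitri_row_finite: "lower_unitri A \<Longrightarrow> row_finite A"
  by (simp add: lower_unitri_def lower_tri_def lower_tri_row_finite)

lemma mult_unitri_inv:
  assumes "lower_unitri A"
  shows "A \<star> unitri_inv A = im_id"
proof (intro ext)
  fix i j
  show "(A \<star> unitri_inv A) i j = im_id i j"
  proof (cases "j \<le> i")
    case True
    have "(A \<star> unitri_inv A) i j = (\<Sum>k\<in>{j..i}. A i k * unitri_inv A k j)"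
      using assms by (intro im_mult_eq_sum) (auto simp: lower_unitri_def unitri_inv.simps)
    also have "\<dots> = A i i * unitri_inv A i j + (\<Sum>k\<in>{j..<i}. A i k * unitri_inv A k j)"
      using True by (simp add: atLeastLessThanSuc_atLeastAtMost[symmetric])
    also have "\<dots> = im_id i j"
      using assms by (subst (1) unitri_inv.simps) (simp add: lower_unitri_def im_id_def)
    finally show ?thesis .
  next
    case False
    then have "A i k * unitri_inv A k j = 0" for k
      using assms lower_unitri_unitri_inv[of A] unfolding lower_unitri_def
      by (cases "k \<le> i") auto
    then have "(A \<star> unitri_inv A) i j = (\<Sum>k\<in>{}. A i k * unitri_inv A k j)"
      by (intro im_mult_eq_sum) simp_all
    with False show ?thesis by (simp add: im_id_def)
  qed
qed

lemma inverse_pair_im_linv: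
  assumes S: "lower_unitri S"
  shows "inverse_pair S (im_linv S)"
proof -
  let ?B = "unitri_inv S"
  have rows: "row_finite S" "row_finite ?B"
    using S lower_unitri_unitri_inv by (simp_all add: lower_unitri_row_finite)
  have SB: "S \<star> ?B = im_id" using S by (rule mult_unitri_inv)
  have "?B \<star> S = ?B \<star> (S \<star> (?B \<star> unitri_inv ?B))"
    using mult_unitri_inv[OF lower_unitri_unitri_inv] by simp
  also have "\<dots> = ?B \<star> ((S \<star> ?B) \<star> unitri_inv ?B)"
    using rows by (simp add: im_mult_assoc)
  also have "\<dots> = im_id"
    using SB mult_unitri_inv[OF lower_unitri_unitri_inv] by simp
  finally have BS: "?B \<star> S = im_id" .
  have "im_linv S = ?B"
    unfolding im_linv_def
  proof (rule the_equality)
    show "lower_tri ?B \<and> S \<star> ?B = im_id \<and> ?B \<star> S = im_id"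
      using SB BS lower_unitri_unitri_inv by (simp add: lower_unitri_def lower_tri_def)
  next
    fix C assume C: "lower_tri C \<and> S \<star> C = im_id \<and> C \<star> S = im_id"
    then have "row_finite C" by (simp add: lower_tri_row_finite)
    then have "C = (C \<star> S) \<star> ?B"
      using rows SB by (simp add: im_mult_assoc)
    with C show "C = ?B" by simp
  qed
  with rows SB BS show ?thesis by (simp add: inverse_pair_def)
qed

section \<open>Matrix-vector products and eigenvectors\<close>

definition im_mult_vec :: "imat \<Rightarrow> (nat \<Rightarrow> complex) \<Rightarrow> nat \<Rightarrow> complex" where
  "im_mult_vec A v = (\<lambda>i. infsum (\<lambda>k. A i k * v k) UNIV)"

lemma im_mult_column: "A \<star> (\<lambda>k _. v k) = (\<lambda>i _. im_mult_vec A v i)"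
  by (simp add: im_mult_def im_mult_vec_def)

lemma im_mult_vec_eq_sum:
  assumes "finite F" "row_support A i \<subseteq> F"
  shows "im_mult_vec A v i = (\<Sum>k\<in>F. A i k * v k)"
  using im_mult_row_support[OF assms, of "\<lambda>k _. v k"] by (simp add: im_mult_column)

lemma im_mult_vec_id [simp]: "im_mult_vec im_id v = v"
  using im_id_mult[of "\<lambda>k _. v k"] by (simp add: im_mult_column fun_eq_iff)

lemma im_mult_vec_mult:
  assumes "row_finite A" "row_finite B"
  shows "im_mult_vec (A \<star> B) v = im_mult_vec A (im_mult_vec B v)"
proof -
  have "(\<lambda>i _. im_mult_vec (A \<star> B) v i) = A \<star> (B \<star> (\<lambda>k _. v k))"
    using assms by (simp add: im_mult_assoc flip: im_mult_column)
  also have "\<dots> = (\<lambda>i _. im_mult_vec A (im_mult_vec B v) i)"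
    by (simp add: im_mult_column)
  finally show ?thesis by (simp add: fun_eq_iff)
qed

lemma im_mult_vec_add:
  assumes "row_finite A" "row_finite B"
  shows "im_mult_vec (im_add A B) v i = im_mult_vec A v i + im_mult_vec B v i"
proof -
  have "im_add A B \<star> (\<lambda>k _. v k) = im_add (A \<star> (\<lambda>k _. v k)) (B \<star> (\<lambda>k _. v k))"
    using assms by (rule im_add_mult)
  then show ?thesis by (simp add: im_mult_column im_add_def fun_eq_iff)
qed

lemma im_mult_vec_lincomb:
  assumes "finite N" "\<And>n. n \<in> N \<Longrightarrow> row_finite (M n)"
  shows "im_mult_vec (\<lambda>i j. \<Sum>n\<in>N. c n * M n i j) v i = (\<Sum>n\<in>N. c n * im_mult_vec (M n) v i)"
proof -
  have "(\<lambda>i j. \<Sum>n\<in>N. c n * M n i j) \<star> (\<lambda>k _. v k)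
      = (\<lambda>i j. \<Sum>n\<in>N. c n * (M n \<star> (\<lambda>k _. v k)) i j)"
    using assms by (rule im_mult_lincomb_right)
  then show ?thesis by (simp add: im_mult_column fun_eq_iff)
qed

lemma im_mult_vec_linear:
  assumes "row_finite A"
  shows "im_mult_vec A (\<lambda>k. a * u k + b * w k) i = a * im_mult_vec A u i + b * im_mult_vec A w i"
  using assms
  by (simp add: im_mult_vec_eq_sum[OF row_finiteD subset_refl] distrib_left sum.distrib
      sum_distrib_left mult_ac)

lemma im_mult_vec_scale:
  assumes "row_finite A"
  shows "im_mult_vec A (\<lambda>k. a * u k) = (\<lambda>i. a * im_mult_vec A u i)"
  using im_mult_vec_linear[OF assms, of a u 0 u] by (simp add: fun_eq_iff)

lemma im_mult_vec_pow_eigen: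
  assumes "row_finite A" "im_mult_vec A v = (\<lambda>i. x * v i)"
  shows "im_mult_vec (im_pow A n) v = (\<lambda>i. x ^ n * v i)"
proof (induction n)
  case (Suc n)
  have "im_mult_vec (im_pow A (Suc n)) v = im_mult_vec A (\<lambda>i. x ^ n * v i)"
    using Suc assms(1) by (simp add: im_mult_vec_mult)
  also have "\<dots> = (\<lambda>i. x ^ n * (x * v i))"
    using assms by (simp add: im_mult_vec_scale)
  finally show ?case by (simp add: mult_ac)
qed simp

lemma im_mult_vec_poly_eigen:
  assumes "row_finite A" "im_mult_vec A v = (\<lambda>i. x * v i)"
  shows "im_mult_vec (im_poly p A) v = (\<lambda>i. poly p x * v i)"
  using assms(1)
  by (simp add: fun_eq_iff im_poly_def im_mult_vec_lincomb im_mult_vec_pow_eigen[OF assms]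
      poly_altdef sum_distrib_left mult_ac)

lemma im_mult_vec_diag: "im_mult_vec (im_diag d) v = (\<lambda>i. d i * v i)"
  by (intro ext, subst im_mult_vec_eq_sum[of "{_}"]) (auto simp: row_support_def im_diag_def)

lemma im_mult_vec_Lambda: "im_mult_vec Lambda v = (\<lambda>i. v (Suc i))"
  by (intro ext, subst im_mult_vec_eq_sum[of "{Suc _}"]) (auto simp: row_support_def Lambda_def)

lemma im_mult_vec_Lambda_Xvec: "im_mult_vec Lambda (Xvec x) = (\<lambda>i. x * Xvec x i)"
  by (simp add: im_mult_vec_Lambda Xvec_def)

lemma im_mult_vec_Pascal_Xvec: "im_mult_vec Pascal (Xvec x) = Xvec (x + 1)"
proof
  fix i
  have "im_mult_vec Pascal (Xvec x) i = (\<Sum>k\<le>i. of_nat (i choose k) * x ^ k)"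
    by (subst im_mult_vec_eq_sum[of "{..i}"]) (auto simp: row_support_def Pascal_def Xvec_def)
  also have "\<dots> = (x + 1) ^ i"
    by (simp add: binomial_ring[of x 1 i])
  finally show "im_mult_vec Pascal (Xvec x) i = Xvec (x + 1) i"
    by (simp add: Xvec_def)
qed

definition Xvec_mod2 :: "nat \<Rightarrow> complex \<Rightarrow> nat \<Rightarrow> complex" where
  "Xvec_mod2 r x i = (if i mod 2 = r then x ^ (i div 2) else 0)"

lemma Xvec1_eq_Xvec_mod2: "Xvec1 x = Xvec_mod2 0 x"
  by (auto simp: Xvec1_def Xvec_mod2_def fun_eq_iff)

lemma Xvec2_eq_Xvec_mod2: "Xvec2 x = Xvec_mod2 1 x"
  by (auto simp: Xvec2_def Xvec_mod2_def fun_eq_iff odd_iff_mod_2_eq_one)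

lemma row_finite_Lambda_par [simp]: "row_finite (Lambda_par a)"
  by (simp add: Lambda_par_def Ipar_def row_finite_mult)

lemma im_mult_vec_Lambda_par:
  "im_mult_vec (Lambda_par a) (Xvec_mod2 r x) = (\<lambda>i. (if r = a - 1 then x else 0) * Xvec_mod2 r x i)"
proof -
  have "im_pow Lambda 2 = Lambda \<star> Lambda" by (simp add: numeral_2_eq_2)
  then have "im_mult_vec (Lambda_par a) (Xvec_mod2 r x)
      = (\<lambda>i. (if Suc (Suc i) mod 2 = a - 1 then 1 else 0) * Xvec_mod2 r x (Suc (Suc i)))"
    by (simp add: Lambda_par_def Ipar_def im_mult_vec_mult row_finite_mult im_mult_vec_Lambda
        im_mult_vec_diag)
  then show ?thesis
    by (auto simp: Xvec_mod2_def fun_eq_iff)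
qed

lemma lower_unitri_Pascal: "lower_unitri Pascal"
  by (simp add: lower_unitri_def Pascal_def)

lemma row_finite_Pascal [simp]: "row_finite Pascal"
  by (simp add: lower_unitri_row_finite lower_unitri_Pascal)

lemma row_support_Pascal_par: "row_support (Pascal_par a) i \<subseteq> {..Suc (2 * (i div 2))}"
  by (auto simp: row_support_def Pascal_par_def)

lemma row_finite_Pascal_par [simp]: "row_finite (Pascal_par a)"
  using row_support_Pascal_par by (meson finite_atMost finite_subset row_finite_def)

lemma im_mult_vec_Pascal_par:
  "im_mult_vec (Pascal_par a) (Xvec_mod2 r x) = (if r = a - 1 then Xvec_mod2 r (x + 1) else (\<lambda>_. 0))"
proof
  fix i :: nat
  define n where "n = i div 2"
  have "im_mult_vec (Pascal_par a) (Xvec_mod2 r x) i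
      = (\<Sum>k\<le>Suc (2 * n). Pascal_par a i k * Xvec_mod2 r x k)"
    unfolding n_def by (rule im_mult_vec_eq_sum[OF _ row_support_Pascal_par]) simp
  also have "\<dots> = (\<Sum>m\<le>n. Pascal_par a i (2 * m) * Xvec_mod2 r x (2 * m)
                      + Pascal_par a i (Suc (2 * m)) * Xvec_mod2 r x (Suc (2 * m)))"
    by (rule sum.in_pairs_0)
  also have "\<dots> = (\<Sum>m\<le>n. if i mod 2 = r \<and> r = a - 1 then of_nat (n choose m) * x ^ m else 0)"
    by (intro sum.cong refl, cases "r = 0"; cases "r = 1") (auto simp: Pascal_par_def Xvec_mod2_def n_def)
  also have "\<dots> = (if r = a - 1 then Xvec_mod2 r (x + 1) else (\<lambda>_. 0)) i"
    by (simp add: Xvec_mod2_def n_def binomial_ring[of x 1])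
  finally show "im_mult_vec (Pascal_par a) (Xvec_mod2 r x) i
      = (if r = a - 1 then Xvec_mod2 r (x + 1) else (\<lambda>_. 0)) i" .
qed

section \<open>Series of outer products\<close>

definition outer_series :: "(nat \<Rightarrow> nat \<Rightarrow> complex) \<Rightarrow> (nat \<Rightarrow> nat \<Rightarrow> complex) \<Rightarrow> imat" where
  "outer_series f g = (\<lambda>i j. \<Sum>t. f t i * g t j)"

definition outer_summable :: "(nat \<Rightarrow> nat \<Rightarrow> complex) \<Rightarrow> (nat \<Rightarrow> nat \<Rightarrow> complex) \<Rightarrow> bool" where
  "outer_summable f g \<longleftrightarrow> (\<forall>i j. summable (\<lambda>t. f t i * g t j))"

lemma im_transpose_outer_series: "im_transpose (outer_series f g) = outer_series g f"
  by (simp add: outer_series_def im_transpose_def mult.commute)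

lemma outer_summable_commute: "outer_summable f g \<longleftrightarrow> outer_summable g f"
  by (auto simp: outer_summable_def mult.commute)

lemma im_mult_vec_outer_term:
  assumes "row_finite A"
  shows "im_mult_vec A (f t) i * g t j = (\<Sum>k\<in>row_support A i. A i k * (f t k * g t j))"
  using assms
  by (simp add: im_mult_vec_eq_sum[OF row_finiteD subset_refl] sum_distrib_left sum_distrib_right
      mult_ac)

lemma outer_summable_mult_vec:
  assumes "row_finite A" "outer_summable f g"
  shows "outer_summable (\<lambda>t. im_mult_vec A (f t)) g"
  using assms
  by (simp add: outer_summable_def im_mult_vec_outer_term summable_sum summable_mult)

lemma im_mult_outer_series:
  assumes "row_finite A" "outer_summable f g"
  shows "A \<star> outer_series f g = outer_series (\<lambda>t. im_mult_vec A (f t)) g"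
proof (intro ext)
  fix i j
  let ?F = "row_support A i"
  have summable: "summable (\<lambda>t. f t k * g t j)" for k
    using assms(2) by (simp add: outer_summable_def)
  have "(A \<star> outer_series f g) i j = (\<Sum>k\<in>?F. \<Sum>t. A i k * (f t k * g t j))"
    using assms(1) by (simp add: im_mult_row_support[OF row_finiteD subset_refl]
        outer_series_def suminf_mult[OF summable])
  also have "\<dots> = (\<Sum>t. \<Sum>k\<in>?F. A i k * (f t k * g t j))"
    by (rule suminf_sum[symmetric]) (simp add: summable_mult summable)
  also have "\<dots> = outer_series (\<lambda>t. im_mult_vec A (f t)) g i j"
    using assms(1) by (simp add: outer_series_def im_mult_vec_outer_term)
  finally show "(A \<star> outer_series f g) i j = outer_series (\<lambda>t. im_mult_vec A (f t)) g i j" .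
qed

lemma outer_summable_mult_vec_right:
  assumes "row_finite B" "outer_summable f g"
  shows "outer_summable f (\<lambda>t. im_mult_vec B (g t))"
  using outer_summable_mult_vec[OF assms(1), of g f] assms(2) outer_summable_commute by blast

lemma outer_series_mult_transpose:
  assumes "row_finite B" "outer_summable f g"
  shows "outer_series f g \<star> im_transpose B = outer_series f (\<lambda>t. im_mult_vec B (g t))"
proof -
  have "outer_series f g \<star> im_transpose B = im_transpose (B \<star> outer_series g f)"
    by (simp add: im_transpose_mult im_transpose_outer_series)
  also have "\<dots> = outer_series f (\<lambda>t. im_mult_vec B (g t))"
    using assms by (simp add: outer_summable_commute im_mult_outer_series im_transpose_outer_series)
  finally show ?thesis .
qed

section \<open>The Pearson equations as a matrix identity\<close>

definition Rmat :: "complex poly \<Rightarrow> complex poly \<Rightarrow> imat" where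
  "Rmat s1 s2 = im_add (Pascal_par 1 \<star> im_poly s1 (Lambda_par 1))
                       (Pascal_par 2 \<star> im_poly s2 (Lambda_par 2))"

lemma row_finite_Rmat [simp]: "row_finite (Rmat s1 s2)"
  by (simp add: Rmat_def row_finite_mult)

lemma im_mult_vec_Pascal_par_poly:
  "im_mult_vec (Pascal_par a \<star> im_poly s (Lambda_par a)) (Xvec_mod2 r x)
     = (if r = a - 1 then (\<lambda>i. poly s x * Xvec_mod2 r (x + 1) i) else (\<lambda>_. 0))"
proof -
  have "im_mult_vec (im_poly s (Lambda_par a)) (Xvec_mod2 r x)
      = (\<lambda>i. poly s (if r = a - 1 then x else 0) * Xvec_mod2 r x i)"
    by (rule im_mult_vec_poly_eigen) (simp_all add: im_mult_vec_Lambda_par)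
  then show ?thesis
    by (cases "r = a - 1") (simp_all add: im_mult_vec_mult im_mult_vec_scale im_mult_vec_Pascal_par)
qed

lemma im_mult_vec_Rmat:
  "im_mult_vec (Rmat s1 s2) (\<lambda>k. a * Xvec1 x k + b * Xvec2 x k)
     = (\<lambda>i. a * poly s1 x * Xvec1 (x + 1) i + b * poly s2 x * Xvec2 (x + 1) i)"
  by (simp add: fun_eq_iff Rmat_def row_finite_mult im_mult_vec_add im_mult_vec_linear
      im_mult_vec_Pascal_par_poly Xvec1_eq_Xvec_mod2 Xvec2_eq_Xvec_mod2)

definition weighted_Xvec :: "(nat \<Rightarrow> complex) \<Rightarrow> (nat \<Rightarrow> complex) \<Rightarrow> nat \<Rightarrow> nat \<Rightarrow> complex" where
  "weighted_Xvec w1 w2 t = (\<lambda>k. w1 t * Xvec1 (of_nat t) k + w2 t * Xvec2 (of_nat t) k)"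

lemma moment_eq_outer_series:
  "moment w1 w2 = outer_series (\<lambda>t. Xvec (of_nat t)) (weighted_Xvec w1 w2)"
  by (simp add: moment_def outer_series_def weighted_Xvec_def)

lemma outer_summable_moment:
  assumes "\<And>n m. summable (\<lambda>k. norm (Xvec (of_nat k) n * w1 k * Xvec1 (of_nat k) m))"
      and "\<And>n m. summable (\<lambda>k. norm (Xvec (of_nat k) n * w2 k * Xvec2 (of_nat k) m))"
  shows "outer_summable (\<lambda>t. Xvec (of_nat t)) (weighted_Xvec w1 w2)"
  unfolding outer_summable_def weighted_Xvec_def
  using summable_add[OF summable_norm_cancel[OF assms(1)] summable_norm_cancel[OF assms(2)]]
  by (simp add: distrib_left mult.assoc)

lemma moment_Pearson:
  fixes \<theta> \<sigma>1 \<sigma>2 :: "complex poly"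
  assumes conv1: "\<And>n m. summable (\<lambda>k. norm (Xvec (of_nat k) n * w1 k * Xvec1 (of_nat k) m))"
      and conv2: "\<And>n m. summable (\<lambda>k. norm (Xvec (of_nat k) n * w2 k * Xvec2 (of_nat k) m))"
      and pearson1: "\<And>k. poly \<theta> (of_nat (Suc k)) * w1 (Suc k) = poly \<sigma>1 (of_nat k) * w1 k"
      and pearson2: "\<And>k. poly \<theta> (of_nat (Suc k)) * w2 (Suc k) = poly \<sigma>2 (of_nat k) * w2 k"
      and theta0: "poly \<theta> 0 = 0"
  shows "im_poly \<theta> Lambda \<star> moment w1 w2 = Pascal \<star> (moment w1 w2 \<star> im_transpose (Rmat \<sigma>1 \<sigma>2))"
proof -
  let ?X = "\<lambda>t. Xvec (of_nat t)" and ?Y = "weighted_Xvec w1 w2"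
  define Y' where "Y' t = (\<lambda>k. w1 t * poly \<sigma>1 (of_nat t) * Xvec1 (of_nat t + 1) k
                             + w2 t * poly \<sigma>2 (of_nat t) * Xvec2 (of_nat t + 1) k)" for t
  have XY: "outer_summable ?X ?Y"
    using conv1 conv2 by (rule outer_summable_moment)
  have \<theta>X: "im_mult_vec (im_poly \<theta> Lambda) (?X t) = (\<lambda>i. poly \<theta> (of_nat t) * ?X t i)" for t
    by (simp add: im_mult_vec_poly_eigen im_mult_vec_Lambda_Xvec)
  have RY: "im_mult_vec (Rmat \<sigma>1 \<sigma>2) (?Y t) = Y' t" for t
    by (simp add: weighted_Xvec_def Y'_def im_mult_vec_Rmat)
  have XY': "outer_summable ?X Y'"
    using outer_summable_mult_vec_right[OF row_finite_Rmat[of \<sigma>1 \<sigma>2] XY] by (simp add: RY)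
  have shift:
    "outer_series (\<lambda>t i. poly \<theta> (of_nat t) * ?X t i) ?Y = outer_series (\<lambda>t. ?X (Suc t)) Y'"
  proof (intro ext)
    fix i j
    define F where "F = (\<lambda>t. poly \<theta> (of_nat t) * ?X t i * ?Y t j)"
    have "summable F"
      using outer_summable_mult_vec[OF row_finite_poly[OF row_finite_Lambda] XY, of \<theta>]
      by (simp add: outer_summable_def \<theta>X F_def)
    moreover have "F 0 = 0" by (simp add: F_def theta0)
    moreover have "F (Suc t) = ?X (Suc t) i * Y' t j" for t
    proof -
      have "F (Suc t) = ?X (Suc t) i *
          ((poly \<theta> (of_nat (Suc t)) * w1 (Suc t)) * Xvec1 (of_nat (Suc t)) j
         + (poly \<theta> (of_nat (Suc t)) * w2 (Suc t)) * Xvec2 (of_nat (Suc t)) j)"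
        unfolding F_def weighted_Xvec_def by (simp only: algebra_simps)
      then show ?thesis
        unfolding pearson1 pearson2 Y'_def by (simp add: algebra_simps)
    qed
    ultimately have "suminf F = (\<Sum>t. ?X (Suc t) i * Y' t j)"
      using suminf_split_head[of F] by simp
    then show "outer_series (\<lambda>t i. poly \<theta> (of_nat t) * ?X t i) ?Y i j
        = outer_series (\<lambda>t. ?X (Suc t)) Y' i j"
      by (simp add: outer_series_def F_def)
  qed
  have "im_poly \<theta> Lambda \<star> moment w1 w2 = outer_series (\<lambda>t i. poly \<theta> (of_nat t) * ?X t i) ?Y"
    using XY by (simp add: moment_eq_outer_series im_mult_outer_series \<theta>X)
  also have "\<dots> = Pascal \<star> outer_series ?X Y'"
    using XY' by (simp add: shift im_mult_outer_series im_mult_vec_Pascal_Xvec add.commute)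
  also have "\<dots> = Pascal \<star> (moment w1 w2 \<star> im_transpose (Rmat \<sigma>1 \<sigma>2))"
    using XY by (simp add: moment_eq_outer_series outer_series_mult_transpose RY)
  finally show ?thesis .
qed

lemma PiInv_mult_poly_Tmat:
  assumes "lower_unitri S"
  shows "PiInv S \<star> im_poly p (Tmat S) = S \<star> (im_linv Pascal \<star> im_poly p Lambda) \<star> im_linv S"
  using inverse_pair_im_linv[OF assms] inverse_pair_im_linv[OF lower_unitri_Pascal]
  by (simp add: PiInv_def Tmat_def inverse_pair_def im_poly_conjugate conjugate_mult)

lemma inverse_pair_Tpar_factors:
  assumes "lower_unitri St" "\<And>i. h i \<noteq> 0"
  shows "inverse_pair (im_diag (\<lambda>i. 1 / h i) \<star> St) (im_linv St \<star> im_diag h)"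
  using assms by (intro inverse_pair_mult inverse_pair_diag inverse_pair_im_linv)

lemma Tpar_PiPar_sum:
  fixes h :: "nat \<Rightarrow> complex"
  assumes "lower_unitri St" "\<And>i. h i \<noteq> 0"
  defines "U \<equiv> im_diag (\<lambda>i. 1 / h i) \<star> St" and "V \<equiv> im_linv St \<star> im_diag h"
  shows "im_add (im_poly \<sigma>1 (im_transpose (Tpar h St 1)) \<star> im_transpose (PiPar h St 1))
                (im_poly \<sigma>2 (im_transpose (Tpar h St 2)) \<star> im_transpose (PiPar h St 2))
       = im_transpose (U \<star> Rmat \<sigma>1 \<sigma>2 \<star> V)"
proof -
  have UV: "inverse_pair U V"
    unfolding U_def V_def using assms(1,2) by (rule inverse_pair_Tpar_factors)
  have "row_finite St" "row_finite (im_linv St)"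
    using inverse_pair_im_linv[OF assms(1)] by (simp_all add: inverse_pair_def)
  then have "Tpar h St a = U \<star> Lambda_par a \<star> V" "PiPar h St a = U \<star> Pascal_par a \<star> V" for a
    by (simp_all add: Tpar_def PiPar_def U_def V_def im_mult_assoc row_finite_mult)
  with UV show ?thesis
    by (simp add: Rmat_def transpose_conjugate_poly_mult conjugate_add inverse_pair_def
        row_finite_mult flip: im_transpose_add)
qed

theorem mainTheorem6:
  fixes w1 w2 :: "nat \<Rightarrow> complex" and S St :: imat and h :: "nat \<Rightarrow> complex"
    and \<theta> \<sigma>1 \<sigma>2 :: "complex poly"
  assumes conv1: "\<And>n m. summable (\<lambda>k. norm (Xvec (of_nat k) n * w1 k * Xvec1 (of_nat k) m))"
      and conv2: "\<And>n m. summable (\<lambda>k. norm (Xvec (of_nat k) n * w2 k * Xvec2 (of_nat k) m))"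
      and minors: "\<And>N. lead_minor (moment w1 w2) N \<noteq> 0"
      and S: "lower_unitri S" and St: "lower_unitri St"
      and h: "\<And>i. h i \<noteq> 0"
      and fact: "moment w1 w2 = im_linv S \<star> im_diag h \<star> im_transpose (im_linv St)"
      and pearson1: "\<And>k. poly \<theta> (of_nat (Suc k)) * w1 (Suc k) = poly \<sigma>1 (of_nat k) * w1 k"
      and pearson2: "\<And>k. poly \<theta> (of_nat (Suc k)) * w2 (Suc k) = poly \<sigma>2 (of_nat k) * w2 k"
      and theta0: "poly \<theta> 0 = 0"
  shows "PiInv S \<star> im_poly \<theta> (Tmat S) =
         im_add (im_poly \<sigma>1 (im_transpose (Tpar h St 1)) \<star> im_transpose (PiPar h St 1))
                (im_poly \<sigma>2 (im_transpose (Tpar h St 2)) \<star> im_transpose (PiPar h St 2))"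
proof -
  define U V where "U = im_diag (\<lambda>i. 1 / h i) \<star> St" and "V = im_linv St \<star> im_diag h"
  have UV: "inverse_pair U V"
    unfolding U_def V_def using St h by (rule inverse_pair_Tpar_factors)
  have SS: "inverse_pair S (im_linv S)" and PP: "inverse_pair Pascal (im_linv Pascal)"
    using S lower_unitri_Pascal by (simp_all add: inverse_pair_im_linv)
  have "moment w1 w2 = im_linv S \<star> im_transpose V"
    using fact SS by (simp add: V_def inverse_pair_def im_transpose_mult im_mult_assoc)
  moreover have "(im_linv Pascal \<star> im_poly \<theta> Lambda) \<star> moment w1 w2
      = moment w1 w2 \<star> im_transpose (Rmat \<sigma>1 \<sigma>2)"
    using moment_Pearson[OF conv1 conv2 pearson1 pearson2 theta0] PP
    by (simp add: inverse_pair_def im_mult_assoc inverse_pair_cancel)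
  ultimately have "S \<star> (im_linv Pascal \<star> im_poly \<theta> Lambda) \<star> im_linv S
      = im_transpose (U \<star> Rmat \<sigma>1 \<sigma>2 \<star> V)"
    using SS UV PP
    by (intro conjugate_eq_transpose_conjugate) (simp_all add: inverse_pair_def row_finite_mult)
  then show ?thesis
    using PiInv_mult_poly_Tmat[OF S] Tpar_PiPar_sum[OF St h] by (simp add: U_def V_def)
qed

end
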